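(* Extend the Thue–Morse sequence $t$ to all of $\mathbb{Z}$ by setting $t(n)=t(-1-n)$ for $n<0$, and define $f(i,j)=t(i+j)$ for all $i,j\in\mathbb{Z}$. Then the coloring $(f(i,j))_{i,j\in\mathbb{Z}}$ of $\mathbb{Z}\times\mathbb{Z}$ is frameless: there do not exist integers $m,n$ and integers $p,q\ge1$ such that $f(m,n+i)=f(m+p,n+i)$ for all $0\le i\le q$ and $f(m+j,n)=f(m+j,n+q)$ for all $0\le j\le p$.
   Context: The Thue–Morse sequence is $t(n)=$ (number of $1$ bits in the binary representation of $n$) mod $2$ for $n\ge0$. A picture frame in a coloring $f$ of $\mathbb{Z}\times\mathbb{Z}$ is a rectangular block $\{m,\dots,m+p\}\times\{n,\dots,n+q\}$ with $p,q\ge1$ whose first and last rows agree and whose first and last columns agree; $f$ is frameless if it contains no picture frame. *)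

theory Defs
  imports Main
begin

fun bitcount :: "nat \<Rightarrow> nat" where
  "bitcount n = (if n = 0 then 0 else n mod 2 + bitcount (n div 2))"

declare bitcount.simps[simp del]

definition thue_morse :: "nat \<Rightarrow> nat" where
  "thue_morse n = bitcount n mod 2"

definition tm_int :: "int \<Rightarrow> nat" where
  "tm_int n = (if n \<ge> 0 then thue_morse (nat n) else thue_morse (nat (-1 - n)))"

definition picture_frame :: "(int \<Rightarrow> int \<Rightarrow> 'a) \<Rightarrow> int \<Rightarrow> int \<Rightarrow> int \<Rightarrow> int \<Rightarrow> bool" where
  "picture_frame f m n p q \<longleftrightarrow> p \<ge> 1 \<and> q \<ge> 1 \<and>
     (\<forall>i. 0 \<le> i \<and> i \<le> q \<longrightarrow> f m (n + i) = f (m + p) (n + i)) \<and>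
     (\<forall>j. 0 \<le> j \<and> j \<le> p \<longrightarrow> f (m + j) n = f (m + j) (n + q))"

definition frameless :: "(int \<Rightarrow> int \<Rightarrow> 'a) \<Rightarrow> bool" where
  "frameless f \<longleftrightarrow> \<not> (\<exists>m n p q. picture_frame f m n p q)"

end

theory Submission
  imports Defs
begin

text \<open>Because \<open>f(i,j)\<close> depends only on \<open>i+j\<close>, a frame with sides \<open>p, q\<close> at \<open>(m,n)\<close> says
  that \<open>t\<close> has period \<open>p\<close> on \<open>[s, s+q+p]\<close> and period \<open>q\<close> on \<open>[s, s+p+q]\<close>, where
  \<open>s = m+n\<close>. Such diagonal frames are excluded by descent on \<open>p+q\<close>. If \<open>q < p\<close>, the two
  periods combine into a frame with sides \<open>p-q, q\<close>. If \<open>p = q\<close> is even, the sequence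
  decimated at the even integers has a frame with sides \<open>p/2\<close>: \<open>t\<close> consists of blocks
  \<open>t(2k) \<noteq> t(2k+1)\<close>, so the parity of \<open>s\<close> does not matter. If \<open>p = q\<close> is odd, each
  step \<open>y, y+1\<close> of \<open>[s, s+p]\<close> is a block or is moved onto one by the period \<open>p\<close>, so \<open>t\<close>
  alternates there, contradicting \<open>t(s) = t(s+p)\<close>. Decimating the extension of \<open>t\<close> to \<open>\<int>\<close>
  gives another sequence made of such blocks, and decimating twice gives back \<open>t\<close>.\<close>

definition diagonal_frame :: "(int \<Rightarrow> 'a) \<Rightarrow> int \<Rightarrow> int \<Rightarrow> int \<Rightarrow> bool" where
  "diagonal_frame X s p q \<longleftrightarrow> 1 \<le> p \<and> 1 \<le> q \<and>
     (\<forall>x\<in>{s..s+q}. X x = X (x + p)) \<and> (\<forall>x\<in>{s..s+p}. X x = X (x + q))"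

definition two_block :: "(int \<Rightarrow> bool) \<Rightarrow> bool" where
  "two_block X \<longleftrightarrow> (\<forall>n. X (2*n + 1) = (\<not> X (2*n)))"

lemma shifted_interval_iff:
  "(\<forall>i. 0 \<le> i \<and> i \<le> q \<longrightarrow> P (s + i)) \<longleftrightarrow> (\<forall>x\<in>{s..s+q}. P (x::int))"
proof (intro iffI ballI)
  fix x assume P: "\<forall>i. 0 \<le> i \<and> i \<le> q \<longrightarrow> P (s + i)" and "x \<in> {s..s+q}"
  then have "0 \<le> x - s \<and> x - s \<le> q" by simp
  with P have "P (s + (x - s))" by blast
  then show "P x" by simp
qed auto

lemma picture_frame_iff_diagonal_frame:
  "picture_frame (\<lambda>i j. X (i + j)) m n p q \<longleftrightarrow> diagonal_frame X (m + n) p q"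
  unfolding picture_frame_def diagonal_frame_def shifted_interval_iff[symmetric]
  by (simp add: algebra_simps)

lemma diagonal_frame_comm: "diagonal_frame X s p q \<longleftrightarrow> diagonal_frame X s q p"
  unfolding diagonal_frame_def by blast

lemma diagonal_frame_comp: "diagonal_frame X s p q \<Longrightarrow> diagonal_frame (g \<circ> X) s p q"
  unfolding diagonal_frame_def by simp

lemma diagonal_frame_diff:
  assumes "diagonal_frame X s p q" and "q < p"
  shows "diagonal_frame X s (p - q) q"
  unfolding diagonal_frame_def
proof (intro conjI ballI)
  fix x assume x: "x \<in> {s..s+q}"
  then have "x + (p - q) \<in> {s..s+p}" using assms(2) by auto
  then have "X (x + (p - q)) = X (x + p)"
    using assms(1) unfolding diagonal_frame_def by (metis add.assoc diff_add_cancel)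
  moreover have "X x = X (x + p)" using assms(1) x unfolding diagonal_frame_def by blast
  ultimately show "X x = X (x + (p - q))" by simp
qed (use assms in \<open>auto simp: diagonal_frame_def\<close>)

lemma diagonal_frame_decimate:
  assumes "two_block X" and "diagonal_frame X s (2*r) (2*r)"
  shows "diagonal_frame (\<lambda>n. X (2*n)) (s div 2) r r"
proof -
  have "X (2*y) = X (2*(y + r))" if y: "y \<in> {s div 2..s div 2 + r}" for y
  proof -
    have "s = 2 * (s div 2) + s mod 2" by simp
    with y have "2*y + s mod 2 \<in> {s..s + 2*r}"
      unfolding atLeastAtMost_iff by linarith
    then have "X (2*y + s mod 2) = X (2*(y + r) + s mod 2)"
      using assms(2) unfolding diagonal_frame_def by (simp add: algebra_simps)
    moreover have "s mod 2 = 0 \<or> s mod 2 = 1" by auto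
    ultimately show ?thesis
      using assms(1) unfolding two_block_def by (metis add_0_right)
  qed
  with assms(2) show ?thesis unfolding diagonal_frame_def by simp
qed

lemma alternating_run:
  assumes "\<forall>y\<in>{s..<s + int k}. X (y + 1) = (\<not> X y)"
  shows "X (s + int k) = (X s \<longleftrightarrow> even k)"
  using assms
proof (induction k)
  case (Suc k)
  then have "X (s + int k + 1) = (\<not> X (s + int k))" by auto
  with Suc show ?case by (simp add: algebra_simps)
qed simp

lemma two_block_no_odd_square_frame:
  assumes "two_block X" and "odd p"
  shows "\<not> diagonal_frame X s p p"
proof
  assume frame: "diagonal_frame X s p p"
  have "X (y + 1) = (\<not> X y)" if y: "y \<in> {s..<s + p}" for y
  proof (cases "even y")
    case True
    then show ?thesis using assms(1) unfolding two_block_def by (metis evenE)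
  next
    case False
    with assms(2) obtain k where k: "y + p = 2*k" by (metis evenE odd_add)
    have "X y = X (y + p)" "X (y + 1) = X (y + 1 + p)"
      using frame y unfolding diagonal_frame_def by auto
    with k show ?thesis using assms(1) unfolding two_block_def by (metis add.commute add.left_commute)
  qed
  moreover have p: "p = int (nat p)" using frame unfolding diagonal_frame_def by simp
  ultimately have "X (s + p) = (X s \<longleftrightarrow> even (nat p))"
    using alternating_run[of s "nat p" X] by simp
  moreover have "X s = X (s + p)" using frame unfolding diagonal_frame_def by auto
  ultimately show False using assms(2) p by (metis even_of_nat)
qed

lemma no_diagonal_frame:
  assumes closed: "\<And>Y. Y \<in> S \<Longrightarrow> two_block Y \<and> (\<lambda>n. Y (2*n)) \<in> S" and "X \<in> S"
  shows "\<not> diagonal_frame X s p q"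
  using assms(2)
proof (induction "nat (p + q)" arbitrary: X s p q rule: less_induct)
  case less
  show ?case
  proof
    assume frame: "diagonal_frame X s p q"
    then have "1 \<le> p" "1 \<le> q" unfolding diagonal_frame_def by auto
    consider "q < p" | "p < q" | "p = q" "even p" | "p = q" "odd p" by linarith
    then show False
    proof cases
      case 1
      with frame have "diagonal_frame X s (p - q) q" by (rule diagonal_frame_diff)
      with less \<open>1 \<le> q\<close> 1 show False by force
    next
      case 2
      with frame have "diagonal_frame X s (q - p) p"
        by (simp add: diagonal_frame_comm[of X s p] diagonal_frame_diff)
      with less \<open>1 \<le> p\<close> 2 show False by force
    next
      case 3
      then obtain r where r: "p = 2*r" by (elim evenE)
      with frame 3 closed[OF less.prems] have "diagonal_frame (\<lambda>n. X (2*n)) (s div 2) r r"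
        by (simp add: diagonal_frame_decimate)
      with less closed[OF less.prems] 3 r \<open>1 \<le> p\<close> show False by force
    next
      case 4
      with frame closed[OF less.prems] show False
        using two_block_no_odd_square_frame by blast
    qed
  qed
qed

lemma bitcount_double: "bitcount (2*k) = bitcount k"
  by (subst bitcount.simps) (simp add: bitcount.simps[of 0])

lemma bitcount_Suc_double: "bitcount (Suc (2*k)) = Suc (bitcount k)"
  by (subst bitcount.simps) simp

definition tm_odd :: "int \<Rightarrow> bool" where
  "tm_odd n \<longleftrightarrow> odd (tm_int n)"

lemma tm_odd_iff_bitcount:
  "tm_odd n \<longleftrightarrow> odd (bitcount (nat (if 0 \<le> n then n else -1 - n)))"
  unfolding tm_odd_def tm_int_def thue_morse_def by simp

lemma tm_odd_double: "tm_odd (2*n) \<longleftrightarrow> (tm_odd n \<longleftrightarrow> 0 \<le> n)"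
proof (cases "0 \<le> n")
  case True
  then have "nat (2*n) = 2 * nat n" by simp
  with True show ?thesis by (simp add: tm_odd_iff_bitcount bitcount_double)
next
  case False
  then have "nat (-1 - 2*n) = Suc (2 * nat (-1 - n))" by simp
  with False show ?thesis by (simp add: tm_odd_iff_bitcount bitcount_Suc_double)
qed

lemma tm_odd_Suc_double: "tm_odd (2*n + 1) \<longleftrightarrow> (tm_odd n \<longleftrightarrow> n < 0)"
proof (cases "0 \<le> n")
  case True
  then have "nat (2*n + 1) = Suc (2 * nat n)" by simp
  with True show ?thesis by (simp add: tm_odd_iff_bitcount bitcount_Suc_double)
next
  case False
  then have "nat (-1 - (2*n + 1)) = 2 * nat (-1 - n)" by simp
  with False show ?thesis by (simp add: tm_odd_iff_bitcount bitcount_double)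
qed

lemma two_block_tm_odd: "two_block tm_odd"
  unfolding two_block_def by (auto simp: tm_odd_double tm_odd_Suc_double)

lemma tm_odd_quadruple: "tm_odd (2 * (2*n)) = tm_odd n"
  using tm_odd_double[of "2*n"] tm_odd_double[of n] by auto

lemma two_block_tm_odd_double: "two_block (\<lambda>n. tm_odd (2*n))"
  unfolding two_block_def
proof
  fix n
  show "tm_odd (2 * (2*n + 1)) = (\<not> tm_odd (2 * (2*n)))"
    using tm_odd_double[of "2*n + 1"] tm_odd_Suc_double[of n] tm_odd_quadruple[of n] by auto
qed

theorem theorem2:
  shows "frameless (\<lambda>i j. tm_int (i + j))"
  unfolding frameless_def
proof
  assume "\<exists>m n p q. picture_frame (\<lambda>i j. tm_int (i + j)) m n p q"
  then obtain s p q where "diagonal_frame tm_int s p q"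
    by (auto simp: picture_frame_iff_diagonal_frame)
  then have "diagonal_frame tm_odd s p q"
    using diagonal_frame_comp[of tm_int s p q odd] by (simp add: comp_def tm_odd_def[abs_def])
  moreover have "\<not> diagonal_frame tm_odd s p q"
  proof (rule no_diagonal_frame[of "{tm_odd, \<lambda>n. tm_odd (2*n)}"])
    show "two_block Y \<and> (\<lambda>n. Y (2*n)) \<in> {tm_odd, \<lambda>n. tm_odd (2*n)}"
      if "Y \<in> {tm_odd, \<lambda>n. tm_odd (2*n)}" for Y
      using that two_block_tm_odd two_block_tm_odd_double tm_odd_quadruple by auto
  qed simp
  ultimately show False by contradiction
qed

end
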